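(* Let $X$ be a real Banach space and let $Y\subset X^*$ be a $w^*$-dense linear subspace such that: (i) the locally convex space $(X,\mu(X,Y))$ is complete; (ii) for every absolutely convex $w^*$-compact set $K\subset Y$, every convex $w^*$-sequentially closed subset of $K$ is $w^*$-closed. Then $(Y,w^* )$ has the Mazur property, i.e. every linear functional $f:Y\to\mathbb{R}$ which is $w^*$-sequentially continuous is $w^*$-continuous.
   Context: $\mu(X,Y)$ denotes the Mackey topology on $X$ associated to the dual pair $\langle X,Y\rangle$: the locally convex topology of uniform convergence on all absolutely convex $w^*$-compact subsets of $Y$. A subset $C$ of a topological space is sequentially closed if no sequence in $C$ converges to a point outside $C$. $w^*$ denotes the weak$^*$ topology $w(X^*,X)$ (restricted to $Y$). *)

theory Defs
  imports "HOL-Analysis.Analysis"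
begin

text \<open>The type 'a \<Rightarrow> real carries the product topology (HOL-Analysis Function_Topology),
  which on X* is exactly the weak-star topology w(X*,X).\<close>
definition dual_space :: "('a::real_normed_vector \<Rightarrow> real) set" where
  "dual_space = {f. bounded_linear f}"

definition lin_subspace :: "('a \<Rightarrow> real) set \<Rightarrow> bool" where
  "lin_subspace Y \<longleftrightarrow> (\<lambda>_. 0) \<in> Y \<and>
     (\<forall>u\<in>Y. \<forall>v\<in>Y. \<forall>a b::real. (\<lambda>x. a * u x + b * v x) \<in> Y)"

definition convex_fset :: "('a \<Rightarrow> real) set \<Rightarrow> bool" where
  "convex_fset C \<longleftrightarrow>
     (\<forall>u\<in>C. \<forall>v\<in>C. \<forall>t::real. 0 \<le> t \<and> t \<le> 1 \<longrightarrow> (\<lambda>x. t * u x + (1 - t) * v x) \<in> C)"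

definition abs_convex_fset :: "('a \<Rightarrow> real) set \<Rightarrow> bool" where
  "abs_convex_fset K \<longleftrightarrow>
     (\<forall>u\<in>K. \<forall>v\<in>K. \<forall>a b::real. \<bar>a\<bar> + \<bar>b\<bar> \<le> 1 \<longrightarrow> (\<lambda>x. a * u x + b * v x) \<in> K)"

definition mackey_sets :: "('a \<Rightarrow> real) set \<Rightarrow> ('a \<Rightarrow> real) set set" where
  "mackey_sets Y = {K. K \<subseteq> Y \<and> abs_convex_fset K \<and> compact K}"

text \<open>Cauchy filters and convergence for mu(X,Y): uniform convergence on the sets in mackey_sets Y.\<close>
definition mackey_cauchy :: "('a \<Rightarrow> real) set \<Rightarrow> 'a filter \<Rightarrow> bool" where
  "mackey_cauchy Y F \<longleftrightarrow> (\<forall>K\<in>mackey_sets Y. \<forall>e>0.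
     eventually (\<lambda>(x, x'). \<forall>y\<in>K. \<bar>y x - y x'\<bar> < e) (prod_filter F F))"

definition mackey_converges :: "('a \<Rightarrow> real) set \<Rightarrow> 'a filter \<Rightarrow> 'a \<Rightarrow> bool" where
  "mackey_converges Y F x0 \<longleftrightarrow> (\<forall>K\<in>mackey_sets Y. \<forall>e>0.
     eventually (\<lambda>x. \<forall>y\<in>K. \<bar>y x - y x0\<bar> < e) F)"

text \<open>Completeness of the locally convex space (X, mu(X,Y)), phrased with Cauchy filters
  (equivalent to completeness with Cauchy nets).\<close>
definition mackey_complete :: "('a \<Rightarrow> real) set \<Rightarrow> bool" where
  "mackey_complete Y \<longleftrightarrow> (\<forall>F::'a filter. F \<noteq> bot \<longrightarrow> mackey_cauchy Y F \<longrightarrow>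
     (\<exists>x0. mackey_converges Y F x0))"

definition seq_closed_fset :: "('a \<Rightarrow> real) set \<Rightarrow> bool" where
  "seq_closed_fset C \<longleftrightarrow> (\<forall>s f. (\<forall>n. s n \<in> C) \<longrightarrow> s \<longlonglongrightarrow> f \<longrightarrow> f \<in> C)"

definition linear_on :: "('a \<Rightarrow> real) set \<Rightarrow> (('a \<Rightarrow> real) \<Rightarrow> real) \<Rightarrow> bool" where
  "linear_on Y f \<longleftrightarrow> (\<forall>u\<in>Y. \<forall>v\<in>Y. \<forall>a b::real.
     f (\<lambda>x. a * u x + b * v x) = a * f u + b * f v)"

definition seq_continuous_on :: "('a \<Rightarrow> real) set \<Rightarrow> (('a \<Rightarrow> real) \<Rightarrow> real) \<Rightarrow> bool" where
  "seq_continuous_on Y f \<longleftrightarrow> (\<forall>s u. (\<forall>n. s n \<in> Y) \<longrightarrow> u \<in> Y \<longrightarrow> s \<longlonglongrightarrow> u \<longrightarrow>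
     (\<lambda>n. f (s n)) \<longlonglongrightarrow> f u)"

definition mazur_property :: "('a \<Rightarrow> real) set \<Rightarrow> bool" where
  "mazur_property Y \<longleftrightarrow> (\<forall>f. linear_on Y f \<longrightarrow> seq_continuous_on Y f \<longrightarrow> continuous_on Y f)"

end

theory Submission
  imports Defs
begin

text \<open>
  On an absolutely convex
  \<open>w*\<close>-compact \<open>K \<subseteq> Y\<close> the sublevel sets of \<open>f\<close> are convex and sequentially closed, hence
  closed by (ii), so \<open>f\<close> is \<open>w*\<close>-continuous on \<open>K\<close>. Continuity at \<open>0\<close> bounds \<open>f\<close> on \<open>K\<close> by
  \<open>\<delta> + W * (\<Sum>i\<in>I. \<bar>y i\<bar>)\<close> for a finite \<open>I \<subseteq> X\<close>, and a Hahn-Banach argument in the finitely many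
  coordinates \<open>y i\<close> yields \<open>x\<close> in the span of \<open>I\<close> with \<open>\<bar>y x - f y\<bar> \<le> \<delta>\<close> on \<open>K\<close>. Hence the sets
  \<open>{x. \<forall>y\<in>K. \<bar>y x - f y\<bar> < e}\<close> form a base of a proper \<open>\<mu>(X,Y)\<close>-Cauchy filter; its limit \<open>x\<^sub>0\<close>,
  given by (i), satisfies \<open>f y = y x\<^sub>0\<close> on \<open>Y\<close>, and evaluation at \<open>x\<^sub>0\<close> is \<open>w*\<close>-continuous.
\<close>

lemma compact_fun_imp_closed:
  fixes K :: "('a \<Rightarrow> real) set"
  assumes "compact K"
  shows "closed K"
proof -
  have "Hausdorff_space (product_topology (\<lambda>i::'a. euclidean::real topology) UNIV)"
    by (simp add: Hausdorff_space_product_topology)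
  then have "Hausdorff_space (euclidean :: ('a \<Rightarrow> real) topology)"
    by (metis euclidean_product_topology)
  moreover have "compactin euclidean K" using assms by simp
  ultimately show ?thesis unfolding closed_closedin by (rule compactin_imp_closedin)
qed

lemma abs_convex_fset_imp_convex_fset:
  assumes "abs_convex_fset K"
  shows "convex_fset K"
  unfolding convex_fset_def
proof (intro ballI allI impI)
  fix u v and t :: real
  assume "u \<in> K" "v \<in> K" "0 \<le> t \<and> t \<le> 1"
  then show "(\<lambda>x. t * u x + (1 - t) * v x) \<in> K"
    using assms[unfolded abs_convex_fset_def, rule_format, of u v t "1 - t"] by simp
qed

lemma abs_convex_fset_scale:
  assumes "abs_convex_fset K" "y \<in> K" "\<bar>m\<bar> \<le> 1"
  shows "(\<lambda>x. m * y x) \<in> K"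
proof -
  have "(\<lambda>x. m * y x + 0 * y x) \<in> K"
    using assms(1)[unfolded abs_convex_fset_def, rule_format, OF assms(2,2), of m 0] assms(3) by simp
  then show ?thesis by simp
qed

lemma abs_convex_fset_zero: "abs_convex_fset K \<Longrightarrow> y \<in> K \<Longrightarrow> (\<lambda>_. 0) \<in> K"
  using abs_convex_fset_scale[of K y 0] by simp

lemma linear_on_scale:
  assumes "linear_on Y f" "y \<in> Y"
  shows "f (\<lambda>x. m * y x) = m * f y"
proof -
  have "f (\<lambda>x. m * y x + 0 * y x) = m * f y + 0 * f y" using assms unfolding linear_on_def by blast
  then show ?thesis by simp
qed

lemma linear_on_subset: "linear_on Y f \<Longrightarrow> K \<subseteq> Y \<Longrightarrow> linear_on K f"
  unfolding linear_on_def by blast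

section \<open>Separation in finitely many coordinates\<close>

lemma concave_slope_le:
  fixes K :: "('a \<Rightarrow> real) set" and q :: "('a \<Rightarrow> real) \<Rightarrow> real"
  assumes K: "convex_fset K"
    and concave: "\<And>u v t. u \<in> K \<Longrightarrow> v \<in> K \<Longrightarrow> 0 \<le> t \<Longrightarrow> t \<le> 1 \<Longrightarrow>
                    t * q u + (1 - t) * q v \<le> q (\<lambda>x. t * u x + (1 - t) * v x)"
    and nonpos: "\<And>y. y \<in> K \<Longrightarrow> y i = 0 \<Longrightarrow> q y \<le> 0"
    and u: "u \<in> K" "u i > 0" and v: "v \<in> K" "v i < 0"
  shows "q u / u i \<le> q v / v i"
proof -
  define t where "t = - v i / (u i - v i)"
  have t: "0 \<le> t" "t \<le> 1" using u v by (auto simp: t_def divide_simps)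
  define w where "w = (\<lambda>x. t * u x + (1 - t) * v x)"
  have "w \<in> K" using K u v t unfolding convex_fset_def w_def by blast
  moreover have "w i = 0" using u v by (simp add: w_def t_def field_simps)
  ultimately have le0: "t * q u + (1 - t) * q v \<le> 0"
    using concave[OF u(1) v(1) t] nonpos unfolding w_def by fastforce
  have "(u i - v i) * t = - v i" "(u i - v i) * (1 - t) = u i"
    using u v by (simp_all add: t_def field_simps)
  then have "u i * q v - v i * q u = (u i - v i) * (t * q u + (1 - t) * q v)"
    by (simp add: distrib_left flip: mult.assoc)
  also have "\<dots> \<le> 0" using u v le0 by (simp add: mult_nonneg_nonpos)
  finally show ?thesis using u v by (simp add: divide_simps) (simp add: algebra_simps)
qed

lemma concave_le_coordinate_multiple:
  fixes K :: "('a \<Rightarrow> real) set" and q :: "('a \<Rightarrow> real) \<Rightarrow> real"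
  assumes K: "convex_fset K" and symmetric: "\<And>u. u \<in> K \<Longrightarrow> (\<lambda>x. - u x) \<in> K"
    and concave: "\<And>u v t. u \<in> K \<Longrightarrow> v \<in> K \<Longrightarrow> 0 \<le> t \<Longrightarrow> t \<le> 1 \<Longrightarrow>
                    t * q u + (1 - t) * q v \<le> q (\<lambda>x. t * u x + (1 - t) * v x)"
    and nonpos: "\<And>y. y \<in> K \<Longrightarrow> y i = 0 \<Longrightarrow> q y \<le> 0"
  shows "\<exists>a. \<forall>y\<in>K. q y \<le> a * y i"
proof (cases "\<exists>u\<in>K. u i \<noteq> 0")
  case False
  then show ?thesis using nonpos by (auto intro!: exI[of _ 0])
next
  case True
  then obtain u where u: "u \<in> K" "u i > 0"
    using symmetric by (metis neg_0_less_iff_less linorder_neqE_linordered_idom)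
  define S where "S = {q y / y i | y. y \<in> K \<and> y i > 0}"
  have slope: "q y / y i \<le> q v / v i" if "y \<in> K" "y i > 0" "v \<in> K" "v i < 0" for y v
    by (rule concave_slope_le[OF K concave nonpos]) (use that in auto)
  have "bdd_above S"
    using slope[of _ "\<lambda>x. - u x"] symmetric[OF u(1)] u(2) by (auto simp: S_def bdd_above_def)
  moreover have "S \<noteq> {}" using u by (auto simp: S_def)
  ultimately have "q y \<le> Sup S * y i" if y: "y \<in> K" for y
  proof (cases rule: linorder_cases[of "y i" 0])
    case less
    then have "Sup S \<le> q y / y i" using \<open>S \<noteq> {}\<close> y by (auto simp: S_def intro!: cSup_least slope)
    then show ?thesis using less by (simp add: le_divide_eq mult.commute)
  next
    case greater
    then have "q y / y i \<le> Sup S" using \<open>bdd_above S\<close> y by (auto simp: S_def intro!: cSup_upper)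
    then show ?thesis using greater by (simp add: divide_le_eq)
  qed (use nonpos y in simp)
  then show ?thesis by blast
qed

lemma weighted_abs_sum_convex:
  fixes u v :: "'a \<Rightarrow> real"
  assumes "W \<ge> 0" "0 \<le> t" "t \<le> 1"
  shows "(\<Sum>i\<in>I. W * \<bar>t * u i + (1 - t) * v i\<bar>)
           \<le> t * (\<Sum>i\<in>I. W * \<bar>u i\<bar>) + (1 - t) * (\<Sum>i\<in>I. W * \<bar>v i\<bar>)"
proof -
  have "\<bar>t * u i + (1 - t) * v i\<bar> \<le> t * \<bar>u i\<bar> + (1 - t) * \<bar>v i\<bar>" for i
    using abs_triangle_ineq[of "t * u i" "(1 - t) * v i"] assms by (simp add: abs_mult)
  then have "W * \<bar>t * u i + (1 - t) * v i\<bar> \<le> W * (t * \<bar>u i\<bar> + (1 - t) * \<bar>v i\<bar>)" for i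
    using \<open>W \<ge> 0\<close> by (rule mult_left_mono)
  then have "W * \<bar>t * u i + (1 - t) * v i\<bar> \<le> t * (W * \<bar>u i\<bar>) + (1 - t) * (W * \<bar>v i\<bar>)" for i
    by (simp add: algebra_simps)
  then have "(\<Sum>i\<in>I. W * \<bar>t * u i + (1 - t) * v i\<bar>)
               \<le> (\<Sum>i\<in>I. t * (W * \<bar>u i\<bar>) + (1 - t) * (W * \<bar>v i\<bar>))"
    by (rule sum_mono)
  then show ?thesis by (simp only: sum.distrib flip: sum_distrib_left)
qed

lemma coordinate_hahn_banach:
  fixes K :: "('a \<Rightarrow> real) set" and g :: "('a \<Rightarrow> real) \<Rightarrow> real"
  assumes "finite I" and K: "convex_fset K" and symmetric: "\<And>u. u \<in> K \<Longrightarrow> (\<lambda>x. - u x) \<in> K"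
    and "W \<ge> 0"
    and "\<And>u v t. u \<in> K \<Longrightarrow> v \<in> K \<Longrightarrow> 0 \<le> t \<Longrightarrow> t \<le> 1 \<Longrightarrow>
           g (\<lambda>x. t * u x + (1 - t) * v x) = t * g u + (1 - t) * g v"
    and "\<And>y. y \<in> K \<Longrightarrow> g y \<le> d + (\<Sum>i\<in>I. W * \<bar>y i\<bar>)"
  shows "\<exists>c. \<forall>y\<in>K. g y - (\<Sum>i\<in>I. c i * y i) \<le> d"
  using assms(1,5,6)
proof (induction I arbitrary: g rule: finite_induct)
  case empty
  then show ?case by auto
next
  case (insert j I)
  txt \<open>The slope \<open>a\<close> of \<open>q\<close> across the hyperplane \<open>y j = 0\<close> is moved into \<open>g\<close>, removing coordinate \<open>j\<close>.\<close>
  define q where "q y = g y - d - (\<Sum>i\<in>I. W * \<bar>y i\<bar>)" for y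
  have "t * q u + (1 - t) * q v \<le> q (\<lambda>x. t * u x + (1 - t) * v x)"
    if "u \<in> K" "v \<in> K" "0 \<le> t" "t \<le> 1" for u v t
    using weighted_abs_sum_convex[OF \<open>W \<ge> 0\<close> that(3,4), where I=I and u=u and v=v] insert.prems(1)[OF that]
    by (simp add: q_def algebra_simps)
  moreover have "q y \<le> 0" if "y \<in> K" "y j = 0" for y
    using insert.prems(2)[OF that(1)] insert.hyps that(2) by (simp add: q_def)
  ultimately obtain a where a: "\<forall>y\<in>K. q y \<le> a * y j"
    using concave_le_coordinate_multiple[OF K symmetric] by blast
  have "\<exists>c. \<forall>y\<in>K. (g y - a * y j) - (\<Sum>i\<in>I. c i * y i) \<le> d"
  proof (rule insert.IH)
    show "g (\<lambda>x. t * u x + (1 - t) * v x) - a * (t * u j + (1 - t) * v j)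
            = t * (g u - a * u j) + (1 - t) * (g v - a * v j)"
      if "u \<in> K" "v \<in> K" "0 \<le> t" "t \<le> 1" for u v t
      using insert.prems(1)[OF that] by (simp add: algebra_simps)
    show "g y - a * y j \<le> d + (\<Sum>i\<in>I. W * \<bar>y i\<bar>)" if "y \<in> K" for y
      using a that unfolding q_def by force
  qed
  then obtain c where c: "\<forall>y\<in>K. (g y - a * y j) - (\<Sum>i\<in>I. c i * y i) \<le> d" by blast
  have "(\<Sum>i\<in>insert j I. (c(j := a)) i * y i) = a * y j + (\<Sum>i\<in>I. c i * y i)" for y
    using insert.hyps by (auto intro: sum.cong)
  then show ?case using c by (intro exI[of _ "c(j := a)"]) (auto simp: algebra_simps)
qed

section \<open>Approximation on absolutely convex compact sets\<close>

lemma closed_sublevel_of_seq_continuous_linear: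
  fixes K Y :: "('a \<Rightarrow> real) set" and f :: "('a \<Rightarrow> real) \<Rightarrow> real"
  assumes KY: "K \<subseteq> Y" and K: "convex_fset K" "closed K"
    and lin: "linear_on Y f" and sc: "seq_continuous_on Y f"
    and closed_sub: "\<And>C. C \<subseteq> K \<Longrightarrow> convex_fset C \<Longrightarrow> seq_closed_fset C \<Longrightarrow> closed C"
  shows "closed {y\<in>K. \<sigma> * f y \<le> a}"
proof (rule closed_sub)
  show "convex_fset {y \<in> K. \<sigma> * f y \<le> a}"
    unfolding convex_fset_def
  proof (intro ballI allI impI)
    fix u v and t :: real
    assume u: "u \<in> {y \<in> K. \<sigma> * f y \<le> a}" and v: "v \<in> {y \<in> K. \<sigma> * f y \<le> a}"
      and t: "0 \<le> t \<and> t \<le> 1"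
    have "f (\<lambda>x. t * u x + (1 - t) * v x) = t * f u + (1 - t) * f v"
      using lin u v KY unfolding linear_on_def by auto
    then have "\<sigma> * f (\<lambda>x. t * u x + (1 - t) * v x) = t * (\<sigma> * f u) + (1 - t) * (\<sigma> * f v)"
      unfolding \<open>f _ = _\<close> by (simp add: algebra_simps)
    also have "\<dots> \<le> t * a + (1 - t) * a"
      using u v t by (intro add_mono mult_left_mono) auto
    finally have "\<sigma> * f (\<lambda>x. t * u x + (1 - t) * v x) \<le> a" by argo
    moreover have "(\<lambda>x. t * u x + (1 - t) * v x) \<in> K"
      using K(1) u v t unfolding convex_fset_def by auto
    ultimately show "(\<lambda>x. t * u x + (1 - t) * v x) \<in> {y \<in> K. \<sigma> * f y \<le> a}" by simp
  qed
  show "seq_closed_fset {y \<in> K. \<sigma> * f y \<le> a}"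
    unfolding seq_closed_fset_def
  proof (intro allI impI)
    fix s g assume s: "\<forall>n. s n \<in> {y \<in> K. \<sigma> * f y \<le> a}" and lim: "s \<longlonglongrightarrow> g"
    have "g \<in> K" using K(2) _ lim by (rule closed_sequentially) (use s in blast)
    then have "(\<lambda>n. f (s n)) \<longlonglongrightarrow> f g"
      using sc s KY lim unfolding seq_continuous_on_def by blast
    then have "(\<lambda>n. \<sigma> * f (s n)) \<longlonglongrightarrow> \<sigma> * f g" by (rule tendsto_mult_left)
    then have "\<sigma> * f g \<le> a" by (rule LIMSEQ_le_const2) (use s in auto)
    with \<open>g \<in> K\<close> show "g \<in> {y \<in> K. \<sigma> * f y \<le> a}" by simp
  qed
qed auto

lemma continuous_on_of_seq_continuous_linear:
  fixes K Y :: "('a \<Rightarrow> real) set" and f :: "('a \<Rightarrow> real) \<Rightarrow> real"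
  assumes "K \<subseteq> Y" "convex_fset K" "closed K" "linear_on Y f" "seq_continuous_on Y f"
    and "\<And>C. C \<subseteq> K \<Longrightarrow> convex_fset C \<Longrightarrow> seq_closed_fset C \<Longrightarrow> closed C"
  shows "continuous_on K f"
  unfolding continuous_on_def
proof (intro ballI order_tendstoI)
  have sublevel: "eventually (\<lambda>y. y \<notin> {y\<in>K. \<sigma> * f y \<le> a}) (at y0 within K)"
    if "a < \<sigma> * f y0" for y0 \<sigma> a
    using closed_sublevel_of_seq_continuous_linear[OF assms, of \<sigma> a] that
    by (intro eventually_at_topological[THEN iffD2] exI[of _ "- {y\<in>K. \<sigma> * f y \<le> a}"])
      (auto simp: open_Compl)
  fix y0 a assume "y0 \<in> K"
  show "eventually (\<lambda>y. a < f y) (at y0 within K)" if "a < f y0"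
    using sublevel[of a 1 y0] that by (auto elim: eventually_mono simp: eventually_at_filter)
  show "eventually (\<lambda>y. f y < a) (at y0 within K)" if "f y0 < a"
    using sublevel[of "-a" "-1" y0] that by (auto elim: eventually_mono simp: eventually_at_filter)
qed

lemma open_fun_contains_coordinate_box:
  fixes A :: "('a \<Rightarrow> real) set"
  assumes "open A" "(\<lambda>_. 0) \<in> A"
  obtains I r where "finite I" "r > 0" "\<And>y. \<forall>i\<in>I. \<bar>y i\<bar> < r \<Longrightarrow> y \<in> A"
proof -
  obtain X where X: "(\<lambda>_. 0) \<in> (\<Pi>\<^sub>E i\<in>UNIV. X i)" "\<forall>i. openin euclidean (X i)"
    "finite {i. X i \<noteq> topspace euclidean}" "(\<Pi>\<^sub>E i\<in>UNIV. X i) \<subseteq> A"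
    using product_topology_open_contains_basis[of "\<lambda>i. euclidean" UNIV A "\<lambda>_. 0"] assms
    unfolding open_fun_def by blast
  define I where "I = {i. X i \<noteq> UNIV}"
  have "finite I" using X(3) by (simp add: I_def)
  have "\<exists>r>0. ball 0 r \<subseteq> X i" for i
  proof -
    have "open (X i)" "(0::real) \<in> X i" using X(1,2) by (auto simp: PiE_iff)
    then show ?thesis by (rule openE) blast
  qed
  then obtain R where R: "\<And>i. R i > 0" "\<And>i. ball 0 (R i) \<subseteq> X i" by metis
  define r where "r = Min (insert 1 (R ` I))"
  have "r > 0" using \<open>finite I\<close> R(1) by (simp add: r_def)
  moreover have "y \<in> A" if y: "\<forall>i\<in>I. \<bar>y i\<bar> < r" for y
  proof -
    have "y i \<in> X i" for i
    proof (cases "i \<in> I")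
      case True
      then have "r \<le> R i" using \<open>finite I\<close> by (simp add: r_def)
      then have "y i \<in> ball 0 (R i)" using y True by auto
      then show ?thesis using R(2) by blast
    qed (simp add: I_def)
    then show ?thesis using X(4) by (auto simp: PiE_iff)
  qed
  ultimately show ?thesis using that \<open>finite I\<close> by blast
qed

lemma continuous_homogeneous_coordinate_bound:
  fixes K :: "('a \<Rightarrow> real) set" and f :: "('a \<Rightarrow> real) \<Rightarrow> real"
  assumes K: "abs_convex_fset K" "(\<lambda>_. 0) \<in> K"
    and homogeneous: "\<And>y m. y \<in> K \<Longrightarrow> f (\<lambda>x. m * y x) = m * f y"
    and cont: "continuous_on K f" and "\<delta> > 0"
  obtains I W where "finite I" "W \<ge> 0" "\<And>y. y \<in> K \<Longrightarrow> f y \<le> \<delta> + (\<Sum>i\<in>I. W * \<bar>y i\<bar>)"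
proof -
  have "f (\<lambda>_. 0) = 0" using homogeneous[OF K(2), of 0] by simp
  then obtain A where A: "open A" "(\<lambda>_. 0) \<in> A" "\<And>y. y \<in> K \<Longrightarrow> y \<in> A \<Longrightarrow> f y < \<delta>"
    using continuous_on_topological[THEN iffD1, OF cont, rule_format, OF K(2), of "{..<\<delta>}"] \<open>\<delta> > 0\<close>
    by auto
  obtain I r where I: "finite I" "r > 0" "\<And>y. \<forall>i\<in>I. \<bar>y i\<bar> < r \<Longrightarrow> y \<in> A"
    using open_fun_contains_coordinate_box[OF A(1,2)] by blast
  have "f y \<le> \<delta> + (\<Sum>i\<in>I. \<delta> / r * \<bar>y i\<bar>)" if y: "y \<in> K" for y
  proof -
    define T where "T = (\<Sum>i\<in>I. \<bar>y i\<bar>)"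
    have "T \<ge> 0" by (simp add: T_def sum_nonneg)
    define m where "m = r / (T + r)"
    have m: "0 < m" "m \<le> 1" "m * T < r" using \<open>T \<ge> 0\<close> I(2) by (auto simp: m_def field_simps)
    have "\<bar>m * y i\<bar> < r" if "i \<in> I" for i
    proof -
      have "\<bar>y i\<bar> \<le> T" unfolding T_def using I(1) that by (intro member_le_sum) auto
      then have "m * \<bar>y i\<bar> \<le> m * T" using m(1) by (simp add: mult_left_mono)
      moreover have "\<bar>m * y i\<bar> = m * \<bar>y i\<bar>" using m(1) by (simp add: abs_mult)
      ultimately show ?thesis using m(3) by linarith
    qed
    then have "m * f y < \<delta>"
      using A(3)[OF abs_convex_fset_scale[OF K(1) y] I(3)] m homogeneous[OF y] by auto
    then have "f y < \<delta> / m" using m by (simp add: field_simps)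
    also have "\<dots> = \<delta> + \<delta> / r * T" using I(2) \<open>T \<ge> 0\<close> by (simp add: m_def field_simps)
    finally show ?thesis by (simp add: T_def sum_distrib_left)
  qed
  moreover have "\<delta> / r \<ge> 0" using \<open>\<delta> > 0\<close> I(2) by simp
  ultimately show ?thesis using that[OF I(1)] by blast
qed

lemma approx_by_evaluation_on_abs_convex:
  fixes K :: "('a::real_normed_vector \<Rightarrow> real) set" and f :: "('a \<Rightarrow> real) \<Rightarrow> real"
  assumes "K \<subseteq> dual_space" and K: "abs_convex_fset K"
    and lin: "linear_on K f" and cont: "continuous_on K f" and "e > 0"
  shows "\<exists>x. \<forall>y\<in>K. \<bar>y x - f y\<bar> < e"
proof (cases "K = {}")
  case False
  then have "(\<lambda>_. 0) \<in> K" using K abs_convex_fset_zero by blast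
  moreover have "e / 2 > 0" using \<open>e > 0\<close> by simp
  ultimately obtain I W where I: "finite I" "W \<ge> 0"
    and bound: "\<And>y. y \<in> K \<Longrightarrow> f y \<le> e / 2 + (\<Sum>i\<in>I. W * \<bar>y i\<bar>)"
    using continuous_homogeneous_coordinate_bound[OF K _ linear_on_scale[OF lin] cont] by blast
  have symmetric: "(\<lambda>x. - u x) \<in> K" if "u \<in> K" for u
    using abs_convex_fset_scale[OF K that, of "-1"] by simp
  have "f (\<lambda>x. t * u x + (1 - t) * v x) = t * f u + (1 - t) * f v" if "u \<in> K" "v \<in> K" for u v t
    using lin that unfolding linear_on_def by blast
  then obtain c where c: "\<And>y. y \<in> K \<Longrightarrow> f y - (\<Sum>i\<in>I. c i * y i) \<le> e / 2"
    using coordinate_hahn_banach[OF I(1) abs_convex_fset_imp_convex_fset[OF K] symmetric I(2) _ bound]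
    by blast
  define x where "x = (\<Sum>i\<in>I. c i *\<^sub>R i)"
  have "\<bar>y x - f y\<bar> < e" if y: "y \<in> K" for y
  proof -
    have "linear y" using assms(1) y by (auto simp: dual_space_def bounded_linear.linear)
    then have yx: "y x = (\<Sum>i\<in>I. c i * y i)"
      unfolding x_def by (simp add: linear_sum linear_scale)
    have "f (\<lambda>x. - y x) = - f y" using linear_on_scale[OF lin y, of "-1"] by simp
    then show ?thesis
      using c[OF y] c[OF symmetric[OF y]] yx \<open>e > 0\<close> by (simp add: sum_negf)
  qed
  then show ?thesis by blast
qed simp

section \<open>The approximating filter\<close>

lemma mackey_sets_sum:
  fixes Y K1 K2 :: "('a \<Rightarrow> real) set"
  assumes Y: "lin_subspace Y" and K1: "K1 \<in> mackey_sets Y" and K2: "K2 \<in> mackey_sets Y"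
  shows "(\<lambda>(u, v). \<lambda>x. u x + v x) ` (K1 \<times> K2) \<in> mackey_sets Y"
proof -
  let ?S = "(\<lambda>(u, v). \<lambda>x. u x + v x) ` (K1 \<times> K2)"
  have K1': "K1 \<subseteq> Y" "abs_convex_fset K1" "compact K1"
    and K2': "K2 \<subseteq> Y" "abs_convex_fset K2" "compact K2"
    using K1 K2 by (auto simp: mackey_sets_def)
  have "?S \<subseteq> Y"
  proof (clarsimp)
    fix u v assume "u \<in> K1" "v \<in> K2"
    then have "(\<lambda>x. 1 * u x + 1 * v x) \<in> Y" using Y K1'(1) K2'(1) unfolding lin_subspace_def by blast
    then show "(\<lambda>x. u x + v x) \<in> Y" by simp
  qed
  moreover have "abs_convex_fset ?S"
    unfolding abs_convex_fset_def
  proof (clarsimp)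
    fix u1 v1 u2 v2 and a b :: real
    assume "u1 \<in> K1" "v1 \<in> K2" "u2 \<in> K1" "v2 \<in> K2" "\<bar>a\<bar> + \<bar>b\<bar> \<le> 1"
    then have "(\<lambda>x. a * u1 x + b * u2 x, \<lambda>x. a * v1 x + b * v2 x) \<in> K1 \<times> K2"
      using K1'(2) K2'(2) unfolding abs_convex_fset_def by blast
    then show "(\<lambda>x. a * (u1 x + v1 x) + b * (u2 x + v2 x)) \<in> ?S"
      by (rule rev_image_eqI) (simp add: algebra_simps)
  qed
  moreover have "compact ?S"
  proof (rule compact_continuous_image)
    show "compact (K1 \<times> K2)" using K1'(3) K2'(3) by (rule compact_Times)
    have "continuous_on (K1 \<times> K2) (\<lambda>p. fst p i + snd p i)" for i
      by (intro continuous_intros continuous_on_product_then_coordinatewise)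
    then show "continuous_on (K1 \<times> K2) (\<lambda>(u, v). \<lambda>x. u x + v x)"
      by (simp add: case_prod_beta continuous_on_coordinatewise_then_product)
  qed
  ultimately show ?thesis by (simp add: mackey_sets_def)
qed

lemma mackey_sets_directed:
  fixes Y K1 K2 :: "('a \<Rightarrow> real) set"
  assumes "lin_subspace Y" "K1 \<in> mackey_sets Y" "K2 \<in> mackey_sets Y"
  obtains K where "K \<in> mackey_sets Y" "K1 \<subseteq> K" "K2 \<subseteq> K"
proof (cases "K1 = {} \<or> K2 = {}")
  case True
  then show ?thesis using that assms(2,3) by blast
next
  case False
  then have "(\<lambda>_. 0) \<in> K1" "(\<lambda>_. 0) \<in> K2"
    using assms(2,3) abs_convex_fset_zero by (auto simp: mackey_sets_def)
  then have "u \<in> (\<lambda>(u, v). \<lambda>x. u x + v x) ` (K1 \<times> K2)" if "u \<in> K1 \<union> K2" for u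
    using that by (auto intro: rev_image_eqI[of "(u, \<lambda>_. 0)"] rev_image_eqI[of "(\<lambda>_. 0, u)"])
  then show ?thesis using that mackey_sets_sum[OF assms] by (meson UnCI subsetI)
qed

lemma mackey_sets_segment:
  fixes Y :: "('a \<Rightarrow> real) set"
  assumes Y: "lin_subspace Y" and y: "y \<in> Y"
  shows "(\<lambda>t. \<lambda>x. t * y x) ` {-1..1} \<in> mackey_sets Y"
proof -
  let ?S = "(\<lambda>t. \<lambda>x. t * y x) ` {-1..1::real}"
  have "(\<lambda>x. t * y x + 0 * y x) \<in> Y" for t using Y y unfolding lin_subspace_def by blast
  then have "?S \<subseteq> Y" by auto
  moreover have "abs_convex_fset ?S"
    unfolding abs_convex_fset_def
  proof (clarsimp)
    fix t1 t2 a b :: real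
    assume "-1 \<le> t1" "t1 \<le> 1" "-1 \<le> t2" "t2 \<le> 1" "\<bar>a\<bar> + \<bar>b\<bar> \<le> 1"
    then have "\<bar>a\<bar> * \<bar>t1\<bar> + \<bar>b\<bar> * \<bar>t2\<bar> \<le> \<bar>a\<bar> * 1 + \<bar>b\<bar> * 1"
      by (intro add_mono mult_left_mono) auto
    then have "\<bar>a * t1 + b * t2\<bar> \<le> 1"
      using abs_triangle_ineq[of "a * t1" "b * t2"] \<open>\<bar>a\<bar> + \<bar>b\<bar> \<le> 1\<close> by (simp add: abs_mult)
    then show "(\<lambda>x. a * (t1 * y x) + b * (t2 * y x)) \<in> ?S"
      by (intro rev_image_eqI[of "a * t1 + b * t2"]) (auto simp: algebra_simps)
  qed
  moreover have "compact ?S"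
    by (intro compact_continuous_image continuous_on_coordinatewise_then_product continuous_intros)
      simp
  ultimately show ?thesis by (simp add: mackey_sets_def)
qed

definition approx_filter :: "('a \<Rightarrow> real) set \<Rightarrow> (('a \<Rightarrow> real) \<Rightarrow> real) \<Rightarrow> 'a filter" where
  "approx_filter Y f =
     (INF (K, e)\<in>mackey_sets Y \<times> {0<..}. principal {x. \<forall>y\<in>K. \<bar>y x - f y\<bar> < e})"

lemma eventually_approx_filter:
  assumes "lin_subspace Y"
  shows "eventually P (approx_filter Y f) \<longleftrightarrow>
           (\<exists>K\<in>mackey_sets Y. \<exists>e>0. \<forall>x. (\<forall>y\<in>K. \<bar>y x - f y\<bar> < e) \<longrightarrow> P x)"
proof -
  let ?A = "\<lambda>(K, e). {x. \<forall>y\<in>K. \<bar>y x - f y\<bar> < e}"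
  have "({}, 1::real) \<in> mackey_sets Y \<times> {0<..}" by (simp add: mackey_sets_def abs_convex_fset_def)
  moreover have "\<exists>c\<in>mackey_sets Y \<times> {0<..}. principal (?A c) \<le> inf (principal (?A a)) (principal (?A b))"
    if ab: "a \<in> mackey_sets Y \<times> {0<..}" "b \<in> mackey_sets Y \<times> {0<..}" for a b
  proof -
    obtain K1 e1 K2 e2 where "a = (K1, e1)" "b = (K2, e2)" "K1 \<in> mackey_sets Y" "K2 \<in> mackey_sets Y"
      "e1 > 0" "e2 > 0"
      using ab by auto
    moreover obtain K where "K \<in> mackey_sets Y" "K1 \<subseteq> K" "K2 \<subseteq> K"
      using mackey_sets_directed[OF assms \<open>K1 \<in> _\<close> \<open>K2 \<in> _\<close>] .
    ultimately show ?thesis by (intro bexI[of _ "(K, min e1 e2)"]) auto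
  qed
  ultimately show ?thesis
    unfolding approx_filter_def
    by (subst eventually_INF_base) (auto simp: eventually_principal)
qed

lemma approx_filter_neq_bot:
  assumes "lin_subspace Y" and approx: "\<forall>K\<in>mackey_sets Y. \<forall>e>0. \<exists>x. \<forall>y\<in>K. \<bar>y x - f y\<bar> < e"
  shows "approx_filter Y f \<noteq> bot"
proof
  assume "approx_filter Y f = bot"
  then have "eventually (\<lambda>_. False) (approx_filter Y f)" by simp
  then obtain K e where "K \<in> mackey_sets Y" "e > 0" "\<And>x. \<not> (\<forall>y\<in>K. \<bar>y x - f y\<bar> < e)"
    unfolding eventually_approx_filter[OF assms(1)] by blast
  then show False using approx by blast
qed

lemma mackey_cauchy_approx_filter:
  assumes "lin_subspace Y"
  shows "mackey_cauchy Y (approx_filter Y f)"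
  unfolding mackey_cauchy_def eventually_prod_same
proof (intro ballI allI impI exI conjI)
  fix K and e :: real assume "K \<in> mackey_sets Y" "e > 0"
  then show "eventually (\<lambda>x. \<forall>y\<in>K. \<bar>y x - f y\<bar> < e / 2) (approx_filter Y f)"
    unfolding eventually_approx_filter[OF assms] by (intro bexI exI[of _ "e / 2"]) auto
  fix x x' assume x: "\<forall>y\<in>K. \<bar>y x - f y\<bar> < e / 2" and x': "\<forall>y\<in>K. \<bar>y x' - f y\<bar> < e / 2"
  have "\<bar>y x - y x'\<bar> < e" if "y \<in> K" for y
    using bspec[OF x that] bspec[OF x' that] by linarith
  then show "case (x, x') of (x, x') \<Rightarrow> \<forall>y\<in>K. \<bar>y x - y x'\<bar> < e" by simp
qed

lemma mackey_limit_of_approx_filter: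
  assumes Y: "lin_subspace Y" and "approx_filter Y f \<noteq> bot"
    and lim: "mackey_converges Y (approx_filter Y f) x0" and y: "y \<in> Y"
  shows "f y = y x0"
proof -
  let ?K = "(\<lambda>t. \<lambda>x. t * y x) ` {-1..1}"
  have K: "?K \<in> mackey_sets Y" using Y y by (rule mackey_sets_segment)
  have "y \<in> ?K" by (intro rev_image_eqI[of 1]) auto
  have "\<bar>f y - y x0\<bar> \<le> 0 + e" if "e > 0" for e
  proof -
    have "eventually (\<lambda>x. \<forall>z\<in>?K. \<bar>z x - z x0\<bar> < e / 2) (approx_filter Y f)"
      using lim K \<open>e > 0\<close> unfolding mackey_converges_def by (meson half_gt_zero)
    moreover have "eventually (\<lambda>x. \<forall>z\<in>?K. \<bar>z x - f z\<bar> < e / 2) (approx_filter Y f)"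
      unfolding eventually_approx_filter[OF Y] using K \<open>e > 0\<close> by (intro bexI exI[of _ "e / 2"]) auto
    ultimately obtain x where x: "\<forall>z\<in>?K. \<bar>z x - z x0\<bar> < e / 2" "\<forall>z\<in>?K. \<bar>z x - f z\<bar> < e / 2"
      using eventually_happens'[OF assms(2)] eventually_conj by blast
    show ?thesis using bspec[OF x(1) \<open>y \<in> ?K\<close>] bspec[OF x(2) \<open>y \<in> ?K\<close>] by linarith
  qed
  then have "\<bar>f y - y x0\<bar> \<le> 0" by (rule field_le_epsilon)
  then show ?thesis by simp
qed

theorem proposition3p1:
  fixes Y :: "('a::banach \<Rightarrow> real) set"
  assumes "Y \<subseteq> dual_space"
    and "lin_subspace Y"
    and "dual_space \<subseteq> closure Y"
    and "mackey_complete Y"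
    and "\<And>K C. K \<in> mackey_sets Y \<Longrightarrow> C \<subseteq> K \<Longrightarrow> convex_fset C \<Longrightarrow> seq_closed_fset C
           \<Longrightarrow> closed C"
  shows "mazur_property Y"
  unfolding mazur_property_def
proof (intro allI impI)
  fix f assume lin: "linear_on Y f" and sc: "seq_continuous_on Y f"
  have "\<forall>K\<in>mackey_sets Y. \<forall>e>0. \<exists>x. \<forall>y\<in>K. \<bar>y x - f y\<bar> < e"
  proof (intro ballI allI impI)
    fix K and e :: real assume K: "K \<in> mackey_sets Y" and "e > 0"
    then have KY: "K \<subseteq> Y" and "abs_convex_fset K" "closed K"
      by (auto simp: mackey_sets_def compact_fun_imp_closed)
    then have "continuous_on K f"
      using abs_convex_fset_imp_convex_fset lin sc assms(5)[OF K]
      by (intro continuous_on_of_seq_continuous_linear)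
    then show "\<exists>x. \<forall>y\<in>K. \<bar>y x - f y\<bar> < e"
      using assms(1) KY \<open>abs_convex_fset K\<close> linear_on_subset[OF lin KY] \<open>e > 0\<close>
      by (intro approx_by_evaluation_on_abs_convex) auto
  qed
  then have "approx_filter Y f \<noteq> bot" by (rule approx_filter_neq_bot[OF assms(2)])
  moreover obtain x0 where "mackey_converges Y (approx_filter Y f) x0"
    using assms(4) calculation mackey_cauchy_approx_filter[OF assms(2)]
    unfolding mackey_complete_def by blast
  ultimately have "f y = y x0" if "y \<in> Y" for y
    using assms(2) that by (intro mackey_limit_of_approx_filter)
  moreover have "continuous_on Y (\<lambda>y. y x0)"
    by (rule continuous_on_subset[OF continuous_on_product_coordinates]) simp
  ultimately show "continuous_on Y f" by (simp cong: continuous_on_cong)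
qed

end
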